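(* Let $a$ and $b$ be relatively prime integers with $1<a<b$, let $(u,v)$ be the definitely least solution of $ax+by=1$, and let $S=\langle a,b\rangle$. Then $\#T(S)=|uv|$.
   Context: $\langle a,b\rangle=\{\lambda_1a+\lambda_2b:\lambda_1,\lambda_2\in\mathbb{N}\}$ with $\mathbb{N}$ the nonnegative integers. $F(S)$ is the largest integer not in $S$; $N(S)=\{s\in S:s<F(S)\}$ and $T(S)=\{s\in N(S): s-1\notin S\text{ and }s+1\notin S\}$. The definitely least solution $(u,v)$ of $ax+by=1$ is the unique integer solution with both $|u|$ and $|v|$ minimal; equivalently the solution with $|u|\le b/2$, $|v|\le a/2$. *)

theory Defs
  imports Main
begin

definition gen2 :: "int \<Rightarrow> int \<Rightarrow> int set" where
  "gen2 a b = {int l1 * a + int l2 * b | l1 l2. True}"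

definition frob :: "int set \<Rightarrow> int" where
  "frob S = (GREATEST x. x \<notin> S)"

definition Nset :: "int set \<Rightarrow> int set" where
  "Nset S = {s \<in> S. s < frob S}"

definition Tset :: "int set \<Rightarrow> int set" where
  "Tset S = {s \<in> Nset S. s - 1 \<notin> S \<and> s + 1 \<notin> S}"

definition def_least_sol :: "int \<Rightarrow> int \<Rightarrow> int \<Rightarrow> int \<Rightarrow> bool" where
  "def_least_sol a b u v \<longleftrightarrow> a * u + b * v = 1 \<and>
     (\<forall>x y. a * x + b * y = 1 \<longrightarrow> \<bar>u\<bar> \<le> \<bar>x\<bar> \<and> \<bar>v\<bar> \<le> \<bar>y\<bar>)"

end

theory Submission
  imports Defs
begin

text \<open>Every integer has a unique representation \<open>n = a x + b y\<close> with \<open>0 \<le> x < b\<close>, and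
  \<open>n \<in> S\<close> iff \<open>y \<ge> 0\<close>. Write \<open>a u - b w = 1\<close> with \<open>0 < u \<le> b/2\<close> and \<open>0 < w \<le> a/2\<close>.
  Passing from \<open>n\<close> to \<open>n \<plusminus> 1\<close> shifts \<open>(x, y)\<close> by \<open>(\<plusminus>u, \<mp>w)\<close>, followed by a
  reduction of \<open>x\<close> modulo \<open>b\<close> when it leaves \<open>[0, b)\<close>. Hence an element of \<open>S\<close> has
  neither neighbour in \<open>S\<close> exactly when \<open>x < u\<close> and \<open>y < w\<close>: \<open>T(S)\<close> is the image of a
  \<open>u \<times> w\<close> rectangle, on which the representation is injective.\<close>

lemma gen2_commute: "gen2 a b = gen2 b a"
  unfolding gen2_def by (auto, (metis add.commute)+)

lemma coprime_normal_formE: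
  fixes a b n :: int
  assumes "coprime a b" and "0 < b"
  obtains x y where "0 \<le> x" "x < b" "n = a * x + b * y"
proof -
  obtain u v where uv: "u * a + v * b = 1"
    using bezout_int[of a b] assms(1) by (auto simp: coprime_iff_gcd_eq_1)
  define q r where "q = (n * u) div b" and "r = (n * u) mod b"
  have nu: "n * u = b * q + r" by (simp add: q_def r_def)
  have "n = a * (n * u) + b * (n * v)"
    using uv by (metis mult.commute distrib_left mult.left_commute mult_1_right)
  then have "n = a * r + b * (n * v + a * q)" unfolding nu by (simp add: algebra_simps)
  moreover have "0 \<le> r" "r < b" using assms(2) by (simp_all add: r_def)
  ultimately show thesis using that by blast
qed

lemma coprime_normal_form_unique:
  fixes a b x y x' y' :: int
  assumes "coprime a b" and "0 \<le> x" "x < b" "0 \<le> x'" "x' < b"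
    and eq: "a * x + b * y = a * x' + b * y'"
  shows "x = x' \<and> y = y'"
proof -
  have "a * (x - x') = b * (y' - y)" using eq by (simp add: algebra_simps)
  then have "b dvd a * (x - x')" by simp
  then have "b dvd x - x'"
    using assms(1) by (metis coprime_commute coprime_dvd_mult_right_iff)
  moreover have "\<bar>x - x'\<bar> < \<bar>b\<bar>" using assms(2-5) by linarith
  ultimately have "x = x'" using dvd_imp_le_int[of "x - x'" b] by linarith
  then show ?thesis using eq assms(2,3) by auto
qed

lemma mem_gen2_iff:
  fixes a b x y n :: int
  assumes "coprime a b" and "0 < a" and "0 \<le> x" "x < b" and n: "n = a * x + b * y"
  shows "n \<in> gen2 a b \<longleftrightarrow> 0 \<le> y"
proof
  assume "n \<in> gen2 a b"
  then obtain l1 l2 :: nat where l: "n = int l1 * a + int l2 * b"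
    by (auto simp: gen2_def)
  define k r where "k = int l1 div b" and "r = int l1 mod b"
  have "0 < b" using assms(3,4) by simp
  then have "k \<ge> 0" "0 \<le> r" "r < b" by (simp_all add: k_def r_def pos_imp_zdiv_nonneg_iff)
  have "int l1 = b * k + r" by (simp add: k_def r_def)
  then have "a * x + b * y = a * r + b * (int l2 + a * k)"
    using l n by (simp add: algebra_simps)
  then have "y = int l2 + a * k"
    using coprime_normal_form_unique[OF assms(1,3,4) \<open>0 \<le> r\<close> \<open>r < b\<close>] by simp
  then show "0 \<le> y" using \<open>k \<ge> 0\<close> assms(2) by simp
next
  assume "0 \<le> y"
  then show "n \<in> gen2 a b" unfolding gen2_def using n assms(3)
    by (intro CollectI exI[of _ "nat x"] exI[of _ "nat y"]) (simp add: algebra_simps)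
qed

lemma not_mem_gen2_le:
  fixes a b n :: int
  assumes "coprime a b" and "0 < a" "0 < b" and "n \<notin> gen2 a b"
  shows "n \<le> a * b - a - b"
proof -
  obtain x y where xy: "0 \<le> x" "x < b" "n = a * x + b * y"
    using coprime_normal_formE[OF assms(1,3)] .
  have "y \<le> -1" using mem_gen2_iff[OF assms(1,2) xy] assms(4) by simp
  then have "b * y \<le> b * (-1)" using assms(3) by (intro mult_left_mono) auto
  moreover have "a * x \<le> a * (b - 1)" using assms(2) xy by (intro mult_left_mono) auto
  ultimately show ?thesis using xy by (simp add: algebra_simps)
qed

lemma frob_gen2:
  fixes a b :: int
  assumes "coprime a b" and "0 < a" "0 < b"
  shows "frob (gen2 a b) = a * b - a - b"
  unfolding frob_def
proof (rule Greatest_equality)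
  have "a * b - a - b = a * (b - 1) + b * (-1)" by (simp add: algebra_simps)
  from mem_gen2_iff[OF assms(1,2) _ _ this] assms(3)
  show "a * b - a - b \<notin> gen2 a b" by simp
qed (use not_mem_gen2_le[OF assms] in blast)

lemma Tset_gen2_eq_image:
  fixes a b u w :: int
  assumes cop: "coprime a b" and "0 < a" "0 < b"
    and uw: "a * u - b * w = 1" and "0 < u" "0 < w" and "2 * u \<le> b" "2 * w \<le> a"
  shows "Tset (gen2 a b) = (\<lambda>(x, y). a * x + b * y) ` ({0..<u} \<times> {0..<w})"
proof (intro set_eqI iffI)
  note mem_iff = mem_gen2_iff[OF cop \<open>0 < a\<close>]
  fix s assume "s \<in> Tset (gen2 a b)"
  then have s: "s \<in> gen2 a b" "s - 1 \<notin> gen2 a b" "s + 1 \<notin> gen2 a b"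
    unfolding Tset_def Nset_def by auto
  obtain x y where xy: "0 \<le> x" "x < b" and s_eq: "s = a * x + b * y"
    using coprime_normal_formE[OF cop \<open>0 < b\<close>] .
  have "0 \<le> y" using mem_iff[OF xy s_eq] s(1) by simp
  have "x < u"
  proof (rule ccontr)
    assume "\<not> x < u"
    then have "0 \<le> x - u" "x - u < b" using xy \<open>0 < u\<close> by simp_all
    moreover have "s - 1 = a * (x - u) + b * (y + w)" using s_eq uw by (simp add: algebra_simps)
    ultimately have "s - 1 \<in> gen2 a b" using mem_iff \<open>0 \<le> y\<close> \<open>0 < w\<close> by simp
    then show False using s(2) by simp
  qed
  have "y < w"
  proof (rule ccontr)
    assume "\<not> y < w"
    moreover have "0 \<le> x + u" "x + u < b" using xy \<open>x < u\<close> assms(5,7) by simp_all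
    moreover have "s + 1 = a * (x + u) + b * (y - w)" using s_eq uw by (simp add: algebra_simps)
    ultimately have "s + 1 \<in> gen2 a b" using mem_iff by simp
    then show False using s(3) by simp
  qed
  show "s \<in> (\<lambda>(x, y). a * x + b * y) ` ({0..<u} \<times> {0..<w})"
    using xy s_eq \<open>0 \<le> y\<close> \<open>x < u\<close> \<open>y < w\<close> by (intro image_eqI[of _ _ "(x, y)"]) auto
next
  note mem_iff = mem_gen2_iff[OF cop \<open>0 < a\<close>]
  fix s assume "s \<in> (\<lambda>(x, y). a * x + b * y) ` ({0..<u} \<times> {0..<w})"
  then obtain x y where xy: "0 \<le> x" "x < u" "0 \<le> y" "y < w" and s_eq: "s = a * x + b * y"
    by auto
  have "s \<in> gen2 a b"
    using mem_iff[OF _ _ s_eq] xy assms(7) by simp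
  moreover have "s + 1 \<notin> gen2 a b"
  proof -
    have "s + 1 = a * (x + u) + b * (y - w)" using s_eq uw by (simp add: algebra_simps)
    from mem_iff[OF _ _ this] show ?thesis using xy assms(5,7) by simp
  qed
  moreover have "s - 1 \<notin> gen2 a b"
  proof -
    have "s - 1 = a * (x - u + b) + b * (y + w - a)" using s_eq uw by (simp add: algebra_simps)
    from mem_iff[OF _ _ this] show ?thesis using xy assms(5,7,8) by simp
  qed
  moreover have "s < frob (gen2 a b)"
    using not_mem_gen2_le[OF cop assms(2,3) \<open>s + 1 \<notin> gen2 a b\<close>] frob_gen2[OF cop assms(2,3)]
    by simp
  ultimately show "s \<in> Tset (gen2 a b)" unfolding Tset_def Nset_def by simp
qed

lemma card_Tset_gen2:
  fixes a b u w :: int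
  assumes "coprime a b" and "0 < a" "0 < b"
    and "a * u - b * w = 1" and "0 < u" "0 < w" and "2 * u \<le> b" "2 * w \<le> a"
  shows "int (card (Tset (gen2 a b))) = u * w"
proof -
  have "inj_on (\<lambda>(x, y). a * x + b * y) ({0..<u} \<times> {0..<w})"
  proof (rule inj_onI, clarsimp)
    fix x y x' y' :: int
    assume "0 \<le> x" "x < u" "0 \<le> x'" "x' < u" and "a * x + b * y = a * x' + b * y'"
    then show "x = x' \<and> y = y'"
      using coprime_normal_form_unique[OF assms(1), of x x' y y'] assms(7) by simp
  qed
  then have "card (Tset (gen2 a b)) = card ({0..<u} \<times> {0..<w})"
    using Tset_gen2_eq_image[OF assms] by (simp add: card_image)
  then show ?thesis using assms(5,6) by (simp add: card_cartesian_product)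
qed

lemma def_least_sol_bounds:
  fixes a b u v :: int
  assumes "def_least_sol a b u v" and "0 < a" "0 < b"
  shows "2 * \<bar>u\<bar> \<le> b" "2 * \<bar>v\<bar> \<le> a"
proof -
  have eq: "a * u + b * v = 1" using assms(1) by (simp add: def_least_sol_def)
  have "a * (u - b) + b * (v + a) = 1" "a * (u + b) + b * (v - a) = 1"
    using eq by (simp_all add: algebra_simps)
  then have "\<bar>u\<bar> \<le> \<bar>u - b\<bar>" "\<bar>u\<bar> \<le> \<bar>u + b\<bar>" "\<bar>v\<bar> \<le> \<bar>v + a\<bar>" "\<bar>v\<bar> \<le> \<bar>v - a\<bar>"
    using assms(1) unfolding def_least_sol_def by blast+
  then show "2 * \<bar>u\<bar> \<le> b" "2 * \<bar>v\<bar> \<le> a" using assms(2,3) by linarith+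
qed

lemma bezout_coeffs_opposite_signs:
  fixes a b u v :: int
  assumes eq: "a * u + b * v = 1" and "1 < a" "1 < b"
  shows "0 < u \<and> v < 0 \<or> u < 0 \<and> 0 < v"
proof -
  have "u \<noteq> 0" "v \<noteq> 0"
    using eq assms(2,3) pos_zmult_eq_1_iff[of b v] pos_zmult_eq_1_iff[of a u] by auto
  moreover have "\<not> (0 < u \<and> 0 < v)"
  proof
    assume "0 < u \<and> 0 < v"
    then have "a \<le> a * u" "0 < b * v" using assms(2,3) by simp_all
    then show False using eq assms(2) by linarith
  qed
  moreover have "\<not> (u < 0 \<and> v < 0)"
  proof
    assume "u < 0 \<and> v < 0"
    then have "a * u < 0" "b * v < 0" using assms(2,3) by (simp_all add: mult_pos_neg)
    then show False using eq by linarith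
  qed
  ultimately show ?thesis by linarith
qed

theorem lemma3p3:
  fixes a b u v :: int
  assumes "coprime a b" and "1 < a" and "a < b"
    and "def_least_sol a b u v"
  shows "int (card (Tset (gen2 a b))) = \<bar>u * v\<bar>"
proof -
  have eq: "a * u + b * v = 1" using assms(4) by (simp add: def_least_sol_def)
  have "0 < a" "0 < b" using assms(2,3) by simp_all
  note bounds = def_least_sol_bounds[OF assms(4) this]
  consider "0 < u" "v < 0" | "u < 0" "0 < v"
    using bezout_coeffs_opposite_signs[OF eq assms(2)] assms(2,3) by fastforce
  then show ?thesis
  proof cases
    case 1
    have "a * u - b * (- v) = 1" using eq by simp
    from card_Tset_gen2[OF assms(1) \<open>0 < a\<close> \<open>0 < b\<close> this] show ?thesis
      using 1 bounds by (simp add: abs_mult)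
  next
    case 2
    have "b * v - a * (- u) = 1" using eq by simp
    from card_Tset_gen2[OF _ \<open>0 < b\<close> \<open>0 < a\<close> this] show ?thesis
      using 2 bounds assms(1) by (simp add: abs_mult gen2_commute[of b a] coprime_commute)
  qed
qed

end
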